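(* Let $\Delta\subset\Delta'$ be (not necessarily lattice) $d$-simplices in $\mathbb{R}^d$ having the origin $O$ as a common vertex and spanning the same cone at $O$. Then for every real $\epsilon$ with $0<\epsilon<1$ and every real $c\ge\sqrt d/\epsilon$ one has $$(c-\epsilon c)\Delta'\subset \mathrm{UC}_\Delta(c\Delta').$$
   Context: For affinely independent $v_0,\dots,v_e$, the affine lattice they define is $v_0+\sum_{i=1}^e\mathbb{Z}(v_i-v_0)$; for a simplex $\Delta=\mathrm{conv}(w_0,\dots,w_e)$ set $\mathcal{L}_\Delta=w_0+\sum_{i=1}^e\mathbb{Z}(w_i-w_0)$ (independent of the ordering of vertices). For an affine lattice $\mathcal L$, a simplex $\Sigma$ is $\mathcal L$-unimodular if $\mathcal L_\Sigma=\mathcal L$. For a polytope $P$, $\mathrm{UC}_{\mathcal L}(P)$ is the union of all $\mathcal L$-unimodular simplices contained in $P$, and $\mathrm{UC}_\Delta(P)=\mathrm{UC}_{\mathcal L_\Delta}(P)$. $cP$ denotes dilatation by $c$ with center $O$. *)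

theory Defs
  imports "HOL-Analysis.Analysis"
begin

text \<open>For affinely independent C and v0 in C this is
  the affine lattice v0 + sum_i Z (v_i - v0) of the paper (the term v = v0 vanishes).\<close>
definition aff_lattice_at :: "'a::real_vector \<Rightarrow> 'a set \<Rightarrow> 'a set" where
  "aff_lattice_at v0 C =
     {v0 + (\<Sum>v\<in>C. c v *\<^sub>R (v - v0)) | c. \<forall>v\<in>C. c v \<in> \<int>}"

text \<open>The lattice L_Delta of the simplex with vertex set C (independent of the choice
  of the base vertex, as noted in the paper).\<close>
definition simplex_lattice :: "'a::real_vector set \<Rightarrow> 'a set" where
  "simplex_lattice C = aff_lattice_at (SOME v0. v0 \<in> C) C"

definition UC :: "'a::real_vector set \<Rightarrow> 'a set \<Rightarrow> 'a set" where
  "UC L P = \<Union> {convex hull C | C. C \<noteq> {} \<and> finite C \<and> \<not> affine_dependent C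
                 \<and> convex hull C \<subseteq> P \<and> simplex_lattice C = L}"

end

(*
  Let h be the linear functional that equals 1 on the nonzero vertices of W, so that
  t * conv W = {p in the cone. h p <= t} for t > 0.  Enumerate the nonzero vertices
  beta_0, ..., beta_(d-1) of the smaller simplex conv V by increasing height h and pass to the
  increments u_k = beta_k - beta_(k-1): they generate the lattice of conv V and have h u_k >= 0.
  A point x of the cone has u-coordinates y_0 >= ... >= y_(d-1) >= 0.  The simplex of the
  Kuhn (Freudenthal) triangulation of the u-coordinates that contains x is unimodular; its
  vertices again have non-increasing nonnegative u-coordinates, so they lie in the cone, and
  they exceed y by at most 1 in each coordinate, so their height is at most
  h x + h beta_(d-1) <= h x + 1.  Hence every point of the cone of height at most c - 1 lies in
  a unimodular simplex inside c * conv W, and (c - eps c) conv W has height at most c - 1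
  because eps c >= sqrt d >= 1; only eps c >= 1 is actually needed.
*)

theory Submission
  imports Defs "HOL-Computational_Algebra.Group_Closure"
begin

lemma group_closure_scaleR_int:
  fixes s :: "'a::real_vector"
  assumes "s \<in> group_closure S" and "r \<in> \<int>"
  shows "r *\<^sub>R s \<in> group_closure S"
proof -
  have of_nat_scaleR: "of_nat n *\<^sub>R s \<in> group_closure S" for n
    by (induction n) (auto simp: algebra_simps intro: group_closure_add assms(1))
  obtain m where "r = of_int m"
    using assms(2) Ints_cases by blast
  then show ?thesis
    using of_nat_scaleR[of "nat m"] of_nat_scaleR[of "nat (- m)"] by (cases "0 \<le> m") auto
qed

lemma group_closure_int_combination:
  fixes f :: "'b \<Rightarrow> 'a::real_vector"
  assumes "\<forall>i\<in>I. c i \<in> \<int>" and "f ` I \<subseteq> S"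
  shows "(\<Sum>i\<in>I. c i *\<^sub>R f i) \<in> group_closure S"
  using assms
  by (induction I rule: infinite_finite_induct)
    (auto intro: group_closure_add group_closure_scaleR_int group_closure.base)

lemma group_closure_int_combinationE:
  fixes f :: "'b \<Rightarrow> 'a::real_vector"
  assumes "x \<in> group_closure (f ` I)" and "finite I"
  obtains c where "\<forall>i\<in>I. c i \<in> \<int>" and "x = (\<Sum>i\<in>I. c i *\<^sub>R f i)"
  using assms(1)
proof (induction arbitrary: thesis)
  case (base s)
  then consider "s = 0" | i where "i \<in> I" "s = f i"
    by auto
  then show ?case
  proof cases
    case 1
    then show ?thesis
      using base.prems[of "\<lambda>_. 0"] by simp
  next
    case 2
    then show ?thesis
      using base.prems[of "\<lambda>k. if k = i then 1 else 0"] assms(2)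
      by (simp add: if_distrib[of "\<lambda>r. r *\<^sub>R _"] cong: if_cong)
  qed
next
  case (diff s t)
  obtain a where a: "\<forall>i\<in>I. a i \<in> \<int>" "s = (\<Sum>i\<in>I. a i *\<^sub>R f i)"
    using diff.IH(1) by blast
  obtain b where b: "\<forall>i\<in>I. b i \<in> \<int>" "t = (\<Sum>i\<in>I. b i *\<^sub>R f i)"
    using diff.IH(2) by blast
  show ?case
    using diff.prems[of "\<lambda>i. a i - b i"] a b
    by (simp add: scaleR_diff_left sum_subtractf)
qed

lemma group_closure_minimal:
  assumes "S \<subseteq> group_closure T"
  shows "group_closure S \<subseteq> group_closure T"
proof
  fix x
  assume "x \<in> group_closure S"
  then show "x \<in> group_closure T"
    by induction (use assms in \<open>auto intro: group_closure.diff\<close>)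
qed

lemma group_closure_translation:
  assumes "a \<in> group_closure S"
  shows "(+) a ` group_closure S = group_closure S"
proof
  show "(+) a ` group_closure S \<subseteq> group_closure S"
    using assms by (auto intro: group_closure_add)
  show "group_closure S \<subseteq> (+) a ` group_closure S"
  proof
    fix x
    assume "x \<in> group_closure S"
    then have "x - a \<in> group_closure S"
      using assms by (rule group_closure.diff)
    then show "x \<in> (+) a ` group_closure S"
      by (rule rev_image_eqI) simp
  qed
qed

lemma aff_lattice_at_eq_group_closure:
  assumes "finite C"
  shows "aff_lattice_at v0 C = (+) v0 ` group_closure ((\<lambda>v. v - v0) ` C)"
proof -
  have "{\<Sum>v\<in>C. c v *\<^sub>R (v - v0) | c. \<forall>v\<in>C. c v \<in> \<int>} = group_closure ((\<lambda>v. v - v0) ` C)"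
    using assms
    by (auto intro!: group_closure_int_combination elim!: group_closure_int_combinationE)
  moreover have "aff_lattice_at v0 C = (+) v0 ` {\<Sum>v\<in>C. c v *\<^sub>R (v - v0) | c. \<forall>v\<in>C. c v \<in> \<int>}"
    unfolding aff_lattice_at_def by blast
  ultimately show ?thesis
    by simp
qed

lemma simplex_lattice_eq_group_closure:
  assumes "finite C" and "C \<noteq> {}" and "C \<subseteq> group_closure U"
    and "U \<subseteq> {a - b | a b. a \<in> C \<and> b \<in> C}"
  shows "simplex_lattice C = group_closure U"
proof -
  define v0 where "v0 = (SOME v. v \<in> C)"
  have v0: "v0 \<in> C"
    unfolding v0_def using assms(2) some_in_eq by blast
  have "group_closure ((\<lambda>v. v - v0) ` C) \<subseteq> group_closure U"
    using assms(3) v0 by (intro group_closure_minimal) (auto intro: group_closure.diff)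
  moreover have "group_closure U \<subseteq> group_closure ((\<lambda>v. v - v0) ` C)"
  proof (rule group_closure_minimal, rule subsetI)
    fix u
    assume "u \<in> U"
    then obtain a b where "a \<in> C" "b \<in> C" and u: "u = (a - v0) - (b - v0)"
      using assms(4) by force
    then have "a - v0 \<in> group_closure ((\<lambda>v. v - v0) ` C)" "b - v0 \<in> group_closure ((\<lambda>v. v - v0) ` C)"
      by (auto intro: group_closure.base)
    then show "u \<in> group_closure ((\<lambda>v. v - v0) ` C)"
      unfolding u by (rule group_closure.diff)
  qed
  ultimately have "simplex_lattice C = (+) v0 ` group_closure U"
    unfolding simplex_lattice_def aff_lattice_at_eq_group_closure[OF assms(1)] v0_def by simp
  also have "\<dots> = group_closure U"
    using assms(3) v0 by (intro group_closure_translation) blast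
  finally show ?thesis .
qed

lemma UC_memI:
  assumes "x \<in> convex hull C" and "convex hull C \<subseteq> P" and "simplex_lattice C = L"
    and "finite C" and "C \<noteq> {}" and "\<not> affine_dependent C"
  shows "x \<in> UC L P"
  unfolding UC_def using assms by blast

lemma not_affine_dependent_by_differences:
  fixes C :: "'a::euclidean_space set"
  assumes "finite C" and "card C \<le> Suc n" and "independent U" and "card U = n"
    and "U \<subseteq> {a - b | a b. a \<in> C \<and> b \<in> C}"
  shows "\<not> affine_dependent C"
proof (cases "C = {}")
  case False
  then obtain q0 where q0: "q0 \<in> C"
    by blast
  define D where "D = (\<lambda>q. - q0 + q) ` (C - {q0})"
  have "card D \<le> n"
    unfolding D_def using card_image_le[of "C - {q0}" "\<lambda>q. - q0 + q"] assms(1,2) q0 by simp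
  have "U \<subseteq> span D"
  proof
    fix v
    assume "v \<in> U"
    then obtain a b where "a \<in> C" "b \<in> C" "v = (a - q0) - (b - q0)"
      using assms(5) by force
    moreover have "c - q0 \<in> span D" if "c \<in> C" for c
      using that by (cases "c = q0") (auto simp: D_def span_zero intro: span_base)
    ultimately show "v \<in> span D"
      by (metis span_diff)
  qed
  then have "n \<le> dim (span D)"
    using assms(3,4) independent_card_le_dim by blast
  have "independent D"
  proof (rule card_le_dim_spanning[of D "span D"])
    show "D \<subseteq> span D"
      by (rule span_superset)
    show "finite D"
      unfolding D_def using assms(1) by simp
    show "card D \<le> dim (span D)"
      using \<open>card D \<le> n\<close> \<open>n \<le> dim (span D)\<close> by linarith
  qed simp
  then show ?thesis
    using affine_dependent_iff_dependent2[OF q0, folded D_def] by blast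
qed simp

text \<open>The points kuhn_vertex u y n j for j = 0, ..., n are the vertices of the simplex of the Kuhn
  triangulation (in the coordinates with respect to u) that contains the point with coordinates y.\<close>

definition kuhn_precedes :: "(nat \<Rightarrow> real) \<Rightarrow> nat \<Rightarrow> nat \<Rightarrow> bool" where
  "kuhn_precedes y k k' \<longleftrightarrow> frac (y k') < frac (y k) \<or> (frac (y k) = frac (y k') \<and> k < k')"

definition kuhn_rank :: "(nat \<Rightarrow> real) \<Rightarrow> nat \<Rightarrow> nat \<Rightarrow> nat" where
  "kuhn_rank y n k = card {k'. k' < n \<and> kuhn_precedes y k' k}"

definition kuhn_coeff :: "(nat \<Rightarrow> real) \<Rightarrow> nat \<Rightarrow> nat \<Rightarrow> nat \<Rightarrow> real" where
  "kuhn_coeff y n j k = of_int \<lfloor>y k\<rfloor> + (if kuhn_rank y n k < j then 1 else 0)"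

definition kuhn_vertex :: "(nat \<Rightarrow> 'a::real_vector) \<Rightarrow> (nat \<Rightarrow> real) \<Rightarrow> nat \<Rightarrow> nat \<Rightarrow> 'a" where
  "kuhn_vertex u y n j = (\<Sum>k<n. kuhn_coeff y n j k *\<^sub>R u k)"

text \<open>For 1 \<le> j \<le> n, kuhn_level y n j is the j-th largest fractional part among y 0, ..., y (n - 1);
  the differences of consecutive levels are the barycentric coordinates of y in the Kuhn simplex.\<close>

definition kuhn_level :: "(nat \<Rightarrow> real) \<Rightarrow> nat \<Rightarrow> nat \<Rightarrow> real" where
  "kuhn_level y n j =
     (if j = 0 then 1 else if j \<le> n then frac (y (inv_into {..<n} (kuhn_rank y n) (j - 1))) else 0)"

lemma kuhn_precedes_irrefl: "\<not> kuhn_precedes y k k"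
  unfolding kuhn_precedes_def by auto

lemma kuhn_precedes_trans: "kuhn_precedes y a b \<Longrightarrow> kuhn_precedes y b c \<Longrightarrow> kuhn_precedes y a c"
  unfolding kuhn_precedes_def by auto

lemma kuhn_precedes_total: "a \<noteq> b \<Longrightarrow> kuhn_precedes y a b \<or> kuhn_precedes y b a"
  unfolding kuhn_precedes_def by auto

lemma kuhn_rank_less:
  assumes "k < n"
  shows "kuhn_rank y n k < n"
proof -
  have "kuhn_rank y n k \<le> card ({..<n} - {k})"
    unfolding kuhn_rank_def using kuhn_precedes_irrefl by (intro card_mono) auto
  then show ?thesis
    using assms by simp
qed

lemma kuhn_rank_strict_mono:
  assumes "k < n" and "kuhn_precedes y k k'"
  shows "kuhn_rank y n k < kuhn_rank y n k'"
  unfolding kuhn_rank_def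
proof (rule psubset_card_mono)
  show "{p. p < n \<and> kuhn_precedes y p k} \<subset> {p. p < n \<and> kuhn_precedes y p k'}"
    using assms kuhn_precedes_trans kuhn_precedes_irrefl by blast
qed simp

lemma kuhn_rank_inj: "inj_on (kuhn_rank y n) {..<n}"
proof (rule inj_onI, rule ccontr)
  fix a b
  assume "a \<in> {..<n}" "b \<in> {..<n}" "kuhn_rank y n a = kuhn_rank y n b" "a \<noteq> b"
  then show False
    using kuhn_precedes_total[of a b y] kuhn_rank_strict_mono[of a n y b] kuhn_rank_strict_mono[of b n y a]
    by auto
qed

lemma kuhn_rank_image: "kuhn_rank y n ` {..<n} = {..<n}"
  by (rule endo_inj_surj) (use kuhn_rank_less kuhn_rank_inj in auto)

lemma kuhn_rank_frac_antimono:
  assumes "k' < n" and "kuhn_rank y n k < kuhn_rank y n k'"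
  shows "frac (y k') \<le> frac (y k)"
proof (rule ccontr)
  assume "\<not> ?thesis"
  then have "kuhn_precedes y k' k"
    unfolding kuhn_precedes_def by auto
  then show False
    using kuhn_rank_strict_mono[of k' n y k] assms by auto
qed

lemma kuhn_vertex_diff:
  assumes "k < n"
  shows "kuhn_vertex u y n (Suc (kuhn_rank y n k)) - kuhn_vertex u y n (kuhn_rank y n k) = u k"
proof -
  have "kuhn_vertex u y n (Suc (kuhn_rank y n k)) - kuhn_vertex u y n (kuhn_rank y n k)
      = (\<Sum>k'<n. (if k' = k then 1 else 0) *\<^sub>R u k')"
    unfolding kuhn_vertex_def sum_subtractf[symmetric]
  proof (rule sum.cong[OF refl])
    fix k'
    assume "k' \<in> {..<n}"
    then have "kuhn_rank y n k' = kuhn_rank y n k \<longleftrightarrow> k' = k"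
      using kuhn_rank_inj[of y n] assms by (auto dest: inj_onD)
    then show "kuhn_coeff y n (Suc (kuhn_rank y n k)) k' *\<^sub>R u k' - kuhn_coeff y n (kuhn_rank y n k) k' *\<^sub>R u k'
        = (if k' = k then 1 else 0) *\<^sub>R u k'"
      unfolding kuhn_coeff_def by (auto simp: algebra_simps)
  qed
  also have "\<dots> = u k"
    using assms by (simp add: if_distrib[of "\<lambda>r. r *\<^sub>R _"] cong: if_cong)
  finally show ?thesis .
qed

lemma kuhn_vertex_differences:
  "u ` {..<n} \<subseteq> {a - b | a b. a \<in> kuhn_vertex u y n ` {..n} \<and> b \<in> kuhn_vertex u y n ` {..n}}"
proof
  fix v
  assume "v \<in> u ` {..<n}"
  then obtain k where k: "k < n" and v: "v = u k"
    by auto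
  let ?r = "kuhn_rank y n k"
  have "kuhn_vertex u y n (Suc ?r) \<in> kuhn_vertex u y n ` {..n}" "kuhn_vertex u y n ?r \<in> kuhn_vertex u y n ` {..n}"
    using kuhn_rank_less[OF k, of y] by auto
  then show "v \<in> {a - b | a b. a \<in> kuhn_vertex u y n ` {..n} \<and> b \<in> kuhn_vertex u y n ` {..n}}"
    unfolding v by (intro CollectI exI conjI) (rule kuhn_vertex_diff[OF k, symmetric])
qed

lemma kuhn_level_rank:
  assumes "k < n"
  shows "kuhn_level y n (Suc (kuhn_rank y n k)) = frac (y k)"
  unfolding kuhn_level_def using kuhn_rank_less[OF assms, of y] kuhn_rank_inj[of y n] assms
  by (simp add: inv_into_f_f)

lemma kuhn_level_antimono: "kuhn_level y n (Suc j) \<le> kuhn_level y n j"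
proof -
  consider "j = 0" | "0 < j" "j < n" | "n \<le> j"
    by linarith
  then show ?thesis
  proof cases
    case 1
    then show ?thesis
      unfolding kuhn_level_def using frac_lt_1 by (auto intro: less_imp_le)
  next
    case 2
    define \<pi> where "\<pi> = inv_into {..<n} (kuhn_rank y n)"
    have "\<pi> i < n" if "i < n" for i
      unfolding \<pi>_def using kuhn_rank_image[of y n] that by (metis inv_into_into lessThan_iff)
    moreover have "kuhn_rank y n (\<pi> i) = i" if "i < n" for i
      unfolding \<pi>_def using kuhn_rank_image[of y n] that by (simp add: f_inv_into_f)
    ultimately have "frac (y (\<pi> j)) \<le> frac (y (\<pi> (j - 1)))"
      using 2 kuhn_rank_frac_antimono[of "\<pi> j" n y "\<pi> (j - 1)"] by auto
    then show ?thesis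
      unfolding kuhn_level_def \<pi>_def[symmetric] using 2 by auto
  next
    case 3
    then show ?thesis
      unfolding kuhn_level_def by auto
  qed
qed

lemma kuhn_level_differences_sum: "(\<Sum>j\<le>n. kuhn_level y n j - kuhn_level y n (Suc j)) = 1"
  unfolding lessThan_Suc_atMost[symmetric] sum_lessThan_telescope' by (simp add: kuhn_level_def)

lemma kuhn_level_weighted_coeff:
  assumes "k < n"
  shows "(\<Sum>j\<le>n. (kuhn_level y n j - kuhn_level y n (Suc j)) * kuhn_coeff y n j k) = y k"
proof -
  let ?r = "kuhn_rank y n k"
  let ?l = "\<lambda>j. kuhn_level y n j - kuhn_level y n (Suc j)"
  have "(\<Sum>j\<le>n. ?l j * kuhn_coeff y n j k) = (\<Sum>j\<le>n. of_int \<lfloor>y k\<rfloor> * ?l j + (if ?r < j then ?l j else 0))"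
    unfolding kuhn_coeff_def by (rule sum.cong) (auto simp: algebra_simps)
  also have "\<dots> = of_int \<lfloor>y k\<rfloor> * sum ?l {..n} + (\<Sum>j\<in>{..n} \<inter> {j. ?r < j}. ?l j)"
    by (simp add: sum.distrib sum_distrib_left sum.If_cases)
  also have "{..n} \<inter> {j. ?r < j} = {Suc ?r..n}"
    by auto
  also have "(\<Sum>j\<in>{Suc ?r..n}. ?l j) = - (\<Sum>j\<in>{Suc ?r..n}. kuhn_level y n (Suc j) - kuhn_level y n j)"
    by (simp add: sum_negf[symmetric])
  also have "\<dots> = kuhn_level y n (Suc ?r) - kuhn_level y n (Suc n)"
    using kuhn_rank_less[OF assms, of y] by (subst sum_Suc_diff) auto
  also have "\<dots> = frac (y k)"
    using kuhn_level_rank[OF assms] by (simp add: kuhn_level_def)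
  finally show ?thesis
    using kuhn_level_differences_sum[of y n] by (simp add: frac_def)
qed

lemma kuhn_point_in_convex_hull: "(\<Sum>k<n. y k *\<^sub>R u k) \<in> convex hull (kuhn_vertex u y n ` {..n})"
proof -
  define l where "l j = kuhn_level y n j - kuhn_level y n (Suc j)" for j
  have "(\<Sum>j\<le>n. l j *\<^sub>R kuhn_vertex u y n j) = (\<Sum>k<n. (\<Sum>j\<le>n. l j * kuhn_coeff y n j k) *\<^sub>R u k)"
    unfolding kuhn_vertex_def scaleR_sum_right scaleR_sum_left scaleR_scaleR by (rule sum.swap)
  also have "\<dots> = (\<Sum>k<n. y k *\<^sub>R u k)"
    unfolding l_def by (simp add: kuhn_level_weighted_coeff)
  finally have "(\<Sum>k<n. y k *\<^sub>R u k) = (\<Sum>j\<le>n. l j *\<^sub>R kuhn_vertex u y n j)" ..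
  also have "\<dots> \<in> convex hull (kuhn_vertex u y n ` {..n})"
  proof (rule convex_sum)
    show "sum l {..n} = 1"
      unfolding l_def by (rule kuhn_level_differences_sum)
    show "0 \<le> l j" for j
      unfolding l_def using kuhn_level_antimono[of y n j] by simp
  qed (auto intro: hull_inc)
  finally show ?thesis .
qed

lemma kuhn_coeff_antimono:
  assumes "k < k'" and "y k' \<le> y k"
  shows "kuhn_coeff y n j k' \<le> kuhn_coeff y n j k"
proof (cases "\<lfloor>y k'\<rfloor> = \<lfloor>y k\<rfloor>")
  case True
  then have "frac (y k') \<le> frac (y k)"
    using assms(2) by (simp add: frac_def)
  then have prec: "kuhn_precedes y k k'"
    using assms(1) unfolding kuhn_precedes_def by auto
  have "kuhn_rank y n k \<le> kuhn_rank y n k'"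
    unfolding kuhn_rank_def using prec kuhn_precedes_trans[of y _ k k'] by (intro card_mono) auto
  then show ?thesis
    using True unfolding kuhn_coeff_def by auto
next
  case False
  then have "real_of_int \<lfloor>y k'\<rfloor> + 1 \<le> real_of_int \<lfloor>y k\<rfloor>"
    using floor_mono[OF assms(2)] by linarith
  then show ?thesis
    unfolding kuhn_coeff_def by (simp split: if_split)
qed

lemma kuhn_vertices_affine_independent:
  fixes u :: "nat \<Rightarrow> 'a::euclidean_space"
  assumes "independent (u ` {..<n})" and "inj_on u {..<n}"
  shows "\<not> affine_dependent (kuhn_vertex u y n ` {..n})"
  using assms card_image_le[of "{..n}" "kuhn_vertex u y n"] card_image[OF assms(2)]
  by (intro not_affine_dependent_by_differences[OF _ _ _ _ kuhn_vertex_differences]) auto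

lemma simplex_lattice_kuhn_vertices:
  "simplex_lattice (kuhn_vertex u y n ` {..n}) = group_closure (u ` {..<n})"
proof (rule simplex_lattice_eq_group_closure)
  show "kuhn_vertex u y n ` {..n} \<subseteq> group_closure (u ` {..<n})"
    unfolding kuhn_vertex_def by (auto intro!: group_closure_int_combination simp: kuhn_coeff_def)
qed (simp_all add: kuhn_vertex_differences)

lemma kuhn_vertex_height_le:
  fixes h :: "'a::real_vector \<Rightarrow> real"
  assumes "linear h" and "\<And>k. k < n \<Longrightarrow> 0 \<le> h (u k)"
  shows "h (kuhn_vertex u y n j) \<le> h (\<Sum>k<n. y k *\<^sub>R u k) + h (\<Sum>k<n. u k)"
proof -
  have "h (kuhn_vertex u y n j) = (\<Sum>k<n. kuhn_coeff y n j k * h (u k))"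
    unfolding kuhn_vertex_def using assms(1) by (simp add: linear_sum linear_scale)
  also have "\<dots> \<le> (\<Sum>k<n. (y k + 1) * h (u k))"
  proof (intro sum_mono mult_right_mono)
    show "kuhn_coeff y n j k \<le> y k + 1" for k
      unfolding kuhn_coeff_def using of_int_floor_le[of "y k"] by (auto simp del: of_int_floor_le)
  qed (use assms(2) in auto)
  also have "\<dots> = h (\<Sum>k<n. y k *\<^sub>R u k) + h (\<Sum>k<n. u k)"
    using assms(1) by (simp add: linear_sum linear_scale algebra_simps sum.distrib)
  finally show ?thesis .
qed

lemma convex_hull_insert_zero_image:
  fixes \<beta> :: "'b \<Rightarrow> 'a::real_vector"
  assumes "finite I" and "inj_on \<beta> I" and "0 \<notin> \<beta> ` I"
  shows "convex hull (insert 0 (\<beta> ` I)) = {\<Sum>k\<in>I. g k *\<^sub>R \<beta> k | g. (\<forall>k\<in>I. 0 \<le> g k) \<and> sum g I \<le> 1}"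
proof (intro equalityI subsetI)
  fix y
  assume "y \<in> convex hull (insert 0 (\<beta> ` I))"
  then obtain w where w: "\<forall>x\<in>insert 0 (\<beta> ` I). 0 \<le> w x" "sum w (insert 0 (\<beta> ` I)) = 1"
    "(\<Sum>x\<in>insert 0 (\<beta> ` I). w x *\<^sub>R x) = y"
    using convex_hull_finite[of "insert 0 (\<beta> ` I)"] assms(1) by auto
  have "y = (\<Sum>k\<in>I. w (\<beta> k) *\<^sub>R \<beta> k)"
    using w(3) assms by (simp add: sum.reindex)
  moreover have "(\<Sum>k\<in>I. w (\<beta> k)) \<le> 1"
    using w(1,2) assms by (simp add: sum.reindex)
  ultimately show "y \<in> {\<Sum>k\<in>I. g k *\<^sub>R \<beta> k | g. (\<forall>k\<in>I. 0 \<le> g k) \<and> sum g I \<le> 1}"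
    using w(1) by (intro CollectI exI[of _ "\<lambda>k. w (\<beta> k)"]) auto
next
  fix y
  assume "y \<in> {\<Sum>k\<in>I. g k *\<^sub>R \<beta> k | g. (\<forall>k\<in>I. 0 \<le> g k) \<and> sum g I \<le> 1}"
  then obtain g where g: "\<forall>k\<in>I. 0 \<le> g k" "sum g I \<le> 1" "y = (\<Sum>k\<in>I. g k *\<^sub>R \<beta> k)"
    by blast
  define w where "w x = (if x = 0 then 1 - sum g I else g (inv_into I \<beta> x))" for x
  have w\<beta>: "w (\<beta> k) = g k" if "k \<in> I" for k
    using that assms(2,3) by (auto simp: w_def)
  have "\<forall>x\<in>insert 0 (\<beta> ` I). 0 \<le> w x"
    using g(1,2) w\<beta> by (auto simp: w_def)
  moreover have "sum w (insert 0 (\<beta> ` I)) = 1"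
    using assms w\<beta> by (simp add: sum.reindex w_def[of 0])
  moreover have "(\<Sum>x\<in>insert 0 (\<beta> ` I). w x *\<^sub>R x) = y"
    using assms w\<beta> g(3) by (simp add: sum.reindex)
  ultimately show "y \<in> convex hull (insert 0 (\<beta> ` I))"
    using convex_hull_finite[of "insert 0 (\<beta> ` I)"] assms(1) by auto
qed

lemma cone_hull_convex_hull_insert_zero_image:
  fixes \<beta> :: "'b \<Rightarrow> 'a::real_vector"
  assumes "finite I" and "inj_on \<beta> I" and "0 \<notin> \<beta> ` I"
  shows "cone hull (convex hull (insert 0 (\<beta> ` I))) = {\<Sum>k\<in>I. g k *\<^sub>R \<beta> k | g. \<forall>k\<in>I. 0 \<le> g k}"
proof (intro equalityI subsetI)
  fix y
  assume "y \<in> cone hull (convex hull (insert 0 (\<beta> ` I)))"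
  then obtain t g where "0 \<le> t" "\<forall>k\<in>I. 0 \<le> g k" "y = t *\<^sub>R (\<Sum>k\<in>I. g k *\<^sub>R \<beta> k)"
    unfolding cone_hull_expl convex_hull_insert_zero_image[OF assms] by blast
  then show "y \<in> {\<Sum>k\<in>I. g k *\<^sub>R \<beta> k | g. \<forall>k\<in>I. 0 \<le> g k}"
    by (intro CollectI exI[of _ "\<lambda>k. t * g k"]) (simp add: scaleR_sum_right)
next
  fix y
  assume "y \<in> {\<Sum>k\<in>I. g k *\<^sub>R \<beta> k | g. \<forall>k\<in>I. 0 \<le> g k}"
  then obtain g where g: "\<forall>k\<in>I. 0 \<le> g k" "y = (\<Sum>k\<in>I. g k *\<^sub>R \<beta> k)"
    by blast
  define t where "t = sum g I + 1"
  have t: "0 < t"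
    unfolding t_def using g(1) sum_nonneg[of I g] by auto
  have "(\<Sum>k\<in>I. (g k / t) *\<^sub>R \<beta> k) \<in> convex hull (insert 0 (\<beta> ` I))"
    unfolding convex_hull_insert_zero_image[OF assms] using g(1) t
    by (intro CollectI exI[of _ "\<lambda>k. g k / t"]) (auto simp: t_def simp flip: sum_divide_distrib)
  moreover have "y = t *\<^sub>R (\<Sum>k\<in>I. (g k / t) *\<^sub>R \<beta> k)"
    using g(2) t by (simp add: scaleR_sum_right)
  ultimately show "y \<in> cone hull (convex hull (insert 0 (\<beta> ` I)))"
    unfolding cone_hull_expl using t by (auto intro!: exI[of _ t])
qed

lemma scaleR_convex_hull_insert_zero:
  fixes h :: "'a::real_vector \<Rightarrow> real"
  assumes "finite S" and "0 \<notin> S" and "linear h" and "\<And>s. s \<in> S \<Longrightarrow> h s = 1" and "0 < c"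
  shows "(\<lambda>x. c *\<^sub>R x) ` (convex hull (insert 0 S)) = {p \<in> cone hull (convex hull (insert 0 S)). h p \<le> c}"
proof -
  have h_sum: "h (\<Sum>s\<in>S. g s *\<^sub>R s) = sum g S" for g
    using assms(3,4) by (simp add: linear_sum linear_scale)
  note conv = convex_hull_insert_zero_image[of S id, simplified, OF assms(1,2)]
  note cone = cone_hull_convex_hull_insert_zero_image[of S id, simplified, OF assms(1,2)]
  show ?thesis
  proof (intro equalityI subsetI)
    fix p
    assume "p \<in> (\<lambda>x. c *\<^sub>R x) ` (convex hull (insert 0 S))"
    then obtain g where g: "\<forall>s\<in>S. 0 \<le> g s" "sum g S \<le> 1" "p = c *\<^sub>R (\<Sum>s\<in>S. g s *\<^sub>R s)"
      unfolding conv by blast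
    then have "p = (\<Sum>s\<in>S. (c * g s) *\<^sub>R s)"
      by (simp add: scaleR_sum_right)
    moreover have "sum (\<lambda>s. c * g s) S \<le> c"
      using g(2) assms(5) by (simp add: sum_distrib_left[symmetric])
    ultimately show "p \<in> {p \<in> cone hull (convex hull (insert 0 S)). h p \<le> c}"
      unfolding cone using g(1) assms(5) h_sum by (auto intro!: exI[of _ "\<lambda>s. c * g s"])
  next
    fix p
    assume "p \<in> {p \<in> cone hull (convex hull (insert 0 S)). h p \<le> c}"
    then obtain g where g: "\<forall>s\<in>S. 0 \<le> g s" "p = (\<Sum>s\<in>S. g s *\<^sub>R s)" "sum g S \<le> c"
      unfolding cone using h_sum by auto
    have "(\<Sum>s\<in>S. (g s / c) *\<^sub>R s) \<in> convex hull (insert 0 S)"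
      unfolding conv using g(1,3) assms(5)
      by (intro CollectI exI[of _ "\<lambda>s. g s / c"]) (auto simp flip: sum_divide_distrib)
    moreover have "p = c *\<^sub>R (\<Sum>s\<in>S. (g s / c) *\<^sub>R s)"
      using g(2) assms(5) by (simp add: scaleR_sum_right)
    ultimately show "p \<in> (\<lambda>x. c *\<^sub>R x) ` (convex hull (insert 0 S))"
      by (rule rev_image_eqI)
  qed
qed

fun increments :: "(nat \<Rightarrow> 'a::ab_group_add) \<Rightarrow> nat \<Rightarrow> 'a" where
  "increments \<beta> 0 = \<beta> 0"
| "increments \<beta> (Suc k) = \<beta> (Suc k) - \<beta> k"

lemma sum_increments: "(\<Sum>k\<le>n. increments \<beta> k) = \<beta> n"
  by (induction n) simp_all

lemma sum_scaleR_increments: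
  fixes \<beta> :: "nat \<Rightarrow> 'a::real_vector"
  shows "(\<Sum>k<n. z k *\<^sub>R increments \<beta> k) = (\<Sum>k<n. (z k - (if Suc k < n then z (Suc k) else 0)) *\<^sub>R \<beta> k)"
proof (induction n)
  case (Suc n)
  show ?case
  proof (cases n)
    case (Suc m)
    have "(\<Sum>k<n. (z k - (if Suc k < n then z (Suc k) else 0)) *\<^sub>R \<beta> k)
        = (\<Sum>k<n. (z k - z (Suc k)) *\<^sub>R \<beta> k) + z n *\<^sub>R \<beta> m"
      using Suc by (simp add: algebra_simps)
    then show ?thesis
      using Suc.IH Suc by (simp add: algebra_simps)
  qed simp
qed simp

lemma sum_scaleR_tail_sums:
  fixes \<beta> :: "nat \<Rightarrow> 'a::real_vector"
  shows "(\<Sum>k<d. A k *\<^sub>R \<beta> k) = (\<Sum>k<d. sum A {k..<d} *\<^sub>R increments \<beta> k)"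
  unfolding sum_scaleR_increments by (rule sum.cong) (auto simp: sum.atLeast_Suc_lessThan)

lemma cone_increment_coordinates:
  fixes \<beta> :: "nat \<Rightarrow> 'a::real_vector"
  assumes "inj_on \<beta> {..<d}" and "0 \<notin> \<beta> ` {..<d}"
    and "x \<in> cone hull (convex hull (insert 0 (\<beta> ` {..<d})))"
  obtains y where "\<And>k. y (Suc k) \<le> y k" and "\<And>k. 0 \<le> y k"
    and "x = (\<Sum>k<d. y k *\<^sub>R increments \<beta> k)"
proof -
  obtain A where A: "\<forall>k\<in>{..<d}. 0 \<le> A k" and x: "x = (\<Sum>k<d. A k *\<^sub>R \<beta> k)"
    using assms(3) unfolding cone_hull_convex_hull_insert_zero_image[OF finite_lessThan assms(1,2)] by blast
  show ?thesis
  proof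
    show "sum A {Suc k..<d} \<le> sum A {k..<d}" for k
      using A by (intro sum_mono2) auto
    show "0 \<le> sum A {k..<d}" for k
      using A by (intro sum_nonneg) auto
    show "x = (\<Sum>k<d. sum A {k..<d} *\<^sub>R increments \<beta> k)"
      unfolding x by (rule sum_scaleR_tail_sums)
  qed
qed

lemma kuhn_vertex_increments_in_cone:
  fixes \<beta> :: "nat \<Rightarrow> 'a::real_vector"
  assumes "inj_on \<beta> {..<d}" and "0 \<notin> \<beta> ` {..<d}"
    and "\<And>k. y (Suc k) \<le> y k" and "\<And>k. 0 \<le> y k"
  shows "kuhn_vertex (increments \<beta>) y d j \<in> cone hull (convex hull (insert 0 (\<beta> ` {..<d})))"
proof -
  let ?m = "kuhn_coeff y d j"
  define g where "g k = ?m k - (if Suc k < d then ?m (Suc k) else 0)" for k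
  have "kuhn_vertex (increments \<beta>) y d j = (\<Sum>k<d. g k *\<^sub>R \<beta> k)"
    unfolding kuhn_vertex_def g_def by (rule sum_scaleR_increments)
  moreover have "0 \<le> g k" for k
    unfolding g_def using kuhn_coeff_antimono[of k "Suc k" y d j] assms(3,4)[of k]
    by (auto simp: kuhn_coeff_def)
  ultimately show ?thesis
    unfolding cone_hull_convex_hull_insert_zero_image[OF finite_lessThan assms(1,2)] by blast
qed

lemma independent_increments:
  fixes \<beta> :: "nat \<Rightarrow> 'a::euclidean_space"
  assumes "independent (\<beta> ` {..<d})" and "inj_on \<beta> {..<d}"
  shows "independent (increments \<beta> ` {..<d})" and "inj_on (increments \<beta>) {..<d}"
proof -
  let ?U = "increments \<beta> ` {..<d}"
  have "\<beta> ` {..<d} \<subseteq> span ?U"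
  proof
    fix v
    assume "v \<in> \<beta> ` {..<d}"
    then obtain n where "n < d" "v = \<beta> n"
      by auto
    moreover have "(\<Sum>k\<le>n. increments \<beta> k) \<in> span ?U"
      using \<open>n < d\<close> by (intro span_sum span_base) auto
    ultimately show "v \<in> span ?U"
      by (simp add: sum_increments)
  qed
  then have "card (\<beta> ` {..<d}) \<le> dim (span ?U)"
    using assms(1) by (rule independent_card_le_dim)
  then have "d \<le> dim (span ?U)"
    using card_image[OF assms(2)] by simp
  moreover have card_U: "card ?U \<le> d"
    using card_image_le[of "{..<d}" "increments \<beta>"] by simp
  ultimately show indep: "independent ?U"
    by (intro card_le_dim_spanning[of ?U "span ?U"]) (auto simp: span_superset)
  have "d \<le> card ?U"
    using \<open>d \<le> dim (span ?U)\<close> dim_span_eq_card_independent[OF indep] by simp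
  then show "inj_on (increments \<beta>) {..<d}"
    using card_U by (simp add: inj_on_iff_eq_card)
qed

lemma simplex_lattice_increments:
  "simplex_lattice (insert 0 (\<beta> ` {..<d})) = group_closure (increments \<beta> ` {..<d})"
proof (rule simplex_lattice_eq_group_closure)
  have "\<beta> n \<in> group_closure (increments \<beta> ` {..<d})" if "n < d" for n
    unfolding sum_increments[of \<beta> n, symmetric] using that
    by (intro group_closure_int_combination[of _ "\<lambda>_. 1", simplified]) auto
  then show "insert 0 (\<beta> ` {..<d}) \<subseteq> group_closure (increments \<beta> ` {..<d})"
    by auto
  show "increments \<beta> ` {..<d} \<subseteq> {a - b | a b. a \<in> insert 0 (\<beta> ` {..<d}) \<and> b \<in> insert 0 (\<beta> ` {..<d})}"
  proof
    fix v
    assume "v \<in> increments \<beta> ` {..<d}"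
    then obtain k where k: "k < d" and v: "v = increments \<beta> k"
      by auto
    show "v \<in> {a - b | a b. a \<in> insert 0 (\<beta> ` {..<d}) \<and> b \<in> insert 0 (\<beta> ` {..<d})}"
    proof (cases k)
      case 0
      then have "v = \<beta> 0 - 0" "\<beta> 0 \<in> insert 0 (\<beta> ` {..<d})"
        using k v by auto
      then show ?thesis
        by blast
    next
      case (Suc m)
      then have "v = \<beta> (Suc m) - \<beta> m" "\<beta> (Suc m) \<in> insert 0 (\<beta> ` {..<d})" "\<beta> m \<in> insert 0 (\<beta> ` {..<d})"
        using k v by auto
      then show ?thesis
        by blast
    qed
  qed
qed simp_all

lemma increments_height_nonneg:
  fixes h :: "'a::real_vector \<Rightarrow> real"
  assumes "linear h" and "\<And>i j. i \<le> j \<Longrightarrow> j < d \<Longrightarrow> h (\<beta> i) \<le> h (\<beta> j)"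
    and "\<And>k. k < d \<Longrightarrow> 0 \<le> h (\<beta> k)" and "k < d"
  shows "0 \<le> h (increments \<beta> k)"
  using assms(3,4) assms(2)[of "k - 1" k] by (cases k) (simp_all add: linear_diff[OF assms(1)])

lemma height_sum_increments_le:
  fixes h :: "'a::real_vector \<Rightarrow> real"
  assumes "linear h" and "\<And>k. k < d \<Longrightarrow> h (\<beta> k) \<le> 1"
  shows "h (\<Sum>k<d. increments \<beta> k) \<le> 1"
proof (cases d)
  case (Suc n)
  then show ?thesis
    using assms(2)[of n] sum_increments[of \<beta> n] by (simp add: lessThan_Suc_atMost)
qed (simp add: linear_0[OF assms(1)])

lemma sorted_enumeration:
  fixes f :: "'a \<Rightarrow> 'b::linorder"
  assumes "finite B"
  obtains \<beta> where "\<beta> ` {..<card B} = B" and "inj_on \<beta> {..<card B}"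
    and "\<And>i j. i \<le> j \<Longrightarrow> j < card B \<Longrightarrow> f (\<beta> i) \<le> f (\<beta> j)"
proof -
  obtain xs where xs: "set xs = B" "distinct xs"
    using finite_distinct_list[OF assms] by blast
  define ys where "ys = sort_key f xs"
  have ys: "set ys = B" "distinct ys" "length ys = card B"
    unfolding ys_def using xs by (auto simp: distinct_card)
  show ?thesis
  proof
    show "(!) ys ` {..<card B} = B"
      using ys by (auto simp: set_conv_nth)
    show "inj_on ((!) ys) {..<card B}"
      using ys by (auto simp: inj_on_def nth_eq_iff_index_eq)
    show "f (ys ! i) \<le> f (ys ! j)" if "i \<le> j" "j < card B" for i j
      using sorted_sort_key[of f xs] that ys(3) unfolding sorted_iff_nth_mono ys_def[symmetric] by auto
  qed
qed

lemma simplex_vertices_sorted_enumeration: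
  fixes V :: "'a::real_vector set" and f :: "'a \<Rightarrow> 'b::linorder"
  assumes "\<not> affine_dependent V" and "finite V" and "0 \<in> V"
  obtains d :: nat and \<beta> where "V = insert 0 (\<beta> ` {..<d})" and "independent (\<beta> ` {..<d})" and "inj_on \<beta> {..<d}"
    and "\<And>i j. i \<le> j \<Longrightarrow> j < d \<Longrightarrow> f (\<beta> i) \<le> f (\<beta> j)"
proof -
  have "finite (V - {0})"
    using assms(2) by simp
  then obtain \<beta> where \<beta>: "\<beta> ` {..<card (V - {0})} = V - {0}" "inj_on \<beta> {..<card (V - {0})}"
    and sorted: "\<And>i j. i \<le> j \<Longrightarrow> j < card (V - {0}) \<Longrightarrow> f (\<beta> i) \<le> f (\<beta> j)"
    by (rule sorted_enumeration[where f = f]) iprover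
  have V_eq: "V = insert 0 (\<beta> ` {..<card (V - {0})})"
    using \<beta>(1) assms(3) by auto
  have indep: "independent (\<beta> ` {..<card (V - {0})})"
    using affine_dependent_iff_dependent2[OF assms(3)] assms(1) \<beta>(1) by simp
  show ?thesis
    by (rule that[OF V_eq indep \<beta>(2) sorted])
qed

lemma mem_UC_truncated_cone:
  fixes \<beta> :: "nat \<Rightarrow> 'a::euclidean_space" and h :: "'a \<Rightarrow> real"
  assumes h: "linear h" and indep: "independent (\<beta> ` {..<d})" and inj: "inj_on \<beta> {..<d}"
    and mono: "\<And>i j. i \<le> j \<Longrightarrow> j < d \<Longrightarrow> h (\<beta> i) \<le> h (\<beta> j)"
    and bounds: "\<And>k. k < d \<Longrightarrow> 0 \<le> h (\<beta> k) \<and> h (\<beta> k) \<le> 1"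
    and x: "x \<in> cone hull (convex hull (insert 0 (\<beta> ` {..<d})))" and hx: "h x \<le> c - 1"
  shows "x \<in> UC (group_closure (increments \<beta> ` {..<d}))
               {p \<in> cone hull (convex hull (insert 0 (\<beta> ` {..<d}))). h p \<le> c}"
proof -
  define K where "K = cone hull (convex hull (insert 0 (\<beta> ` {..<d})))"
  define u where "u = increments \<beta>"
  have nonzero: "0 \<notin> \<beta> ` {..<d}"
    using indep dependent_zero by metis
  obtain y where y_antimono: "\<And>k. y (Suc k) \<le> y k" and y_nonneg: "\<And>k. 0 \<le> y k"
    and x_y: "x = (\<Sum>k<d. y k *\<^sub>R u k)"
    unfolding u_def by (rule cone_increment_coordinates[OF inj nonzero x]) iprover
  define C where "C = kuhn_vertex u y d ` {..d}"
  have hu: "0 \<le> h (u k)" if "k < d" for k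
    unfolding u_def by (rule increments_height_nonneg[OF h mono]) (use bounds that in auto)
  have sum_hu: "h (\<Sum>k<d. u k) \<le> 1"
    unfolding u_def by (rule height_sum_increments_le[OF h]) (use bounds in auto)
  have "C \<subseteq> {p \<in> K. h p \<le> c}"
  proof
    fix p
    assume "p \<in> C"
    then obtain j where p: "p = kuhn_vertex u y d j"
      unfolding C_def by blast
    have "p \<in> K"
      unfolding p K_def u_def using inj nonzero y_antimono y_nonneg by (rule kuhn_vertex_increments_in_cone)
    moreover have "h p \<le> h (\<Sum>k<d. y k *\<^sub>R u k) + h (\<Sum>k<d. u k)"
      unfolding p using h hu by (rule kuhn_vertex_height_le)
    ultimately show "p \<in> {p \<in> K. h p \<le> c}"
      using hx sum_hu unfolding x_y by simp
  qed
  moreover have "convex {p \<in> K. h p \<le> c}"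
  proof -
    have "{p \<in> K. h p \<le> c} = K \<inter> h -` {..c}"
      by auto
    then show ?thesis
      by (simp add: K_def convex_Int convex_cone_hull convex_linear_vimage[OF h])
  qed
  ultimately have "convex hull C \<subseteq> {p \<in> K. h p \<le> c}"
    by (rule hull_minimal)
  moreover have "x \<in> convex hull C"
    unfolding C_def x_y by (rule kuhn_point_in_convex_hull)
  moreover have "simplex_lattice C = group_closure (u ` {..<d})"
    unfolding C_def by (rule simplex_lattice_kuhn_vertices)
  moreover have "\<not> affine_dependent C"
    unfolding C_def u_def by (rule kuhn_vertices_affine_independent[OF independent_increments[OF indep inj]])
  ultimately show ?thesis
    unfolding K_def u_def by (intro UC_memI) (auto simp: C_def)
qed

lemma simplex_height_function:
  fixes W :: "'a::euclidean_space set"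
  assumes "\<not> affine_dependent W" and "finite W" and "0 \<in> W"
  obtains h :: "'a \<Rightarrow> real" where "linear h" and "\<And>w. w \<in> convex hull W \<Longrightarrow> 0 \<le> h w \<and> h w \<le> 1"
    and "\<And>t. 0 < t \<Longrightarrow> (\<lambda>x. t *\<^sub>R x) ` (convex hull W) = {p \<in> cone hull (convex hull W). h p \<le> t}"
proof -
  have "independent (W - {0})"
    using affine_dependent_iff_dependent2[OF assms(3)] assms(1) by simp
  then obtain h :: "'a \<Rightarrow> real" where h: "linear h" "\<And>w. w \<in> W - {0} \<Longrightarrow> h w = 1"
    using linear_independent_extend[of "W - {0}" "\<lambda>_. 1"] by blast
  show ?thesis
  proof
    show "linear h"
      by (fact h(1))
    have "h w \<in> {0..1}" if "w \<in> W" for w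
      using that h by (cases "w = 0") (auto simp: linear_0)
    then have "convex hull W \<subseteq> h -` {0..1}"
      using h by (intro hull_minimal convex_linear_vimage) auto
    then show "0 \<le> h w \<and> h w \<le> 1" if "w \<in> convex hull W" for w
      using that by auto
    show "(\<lambda>x. t *\<^sub>R x) ` (convex hull W) = {p \<in> cone hull (convex hull W). h p \<le> t}" if "0 < t" for t
      using scaleR_convex_hull_insert_zero[of "W - {0}" h t] assms(2) h that
      unfolding insert_Diff[OF assms(3)] by simp
  qed
qed

theorem lemma2p2:
  fixes V W :: "'a::euclidean_space set" and \<epsilon> c :: real
  assumes "\<not> affine_dependent V" and "card V = DIM('a) + 1" and "0 \<in> V"
    and "\<not> affine_dependent W" and "card W = DIM('a) + 1" and "0 \<in> W"
    and "convex hull V \<subseteq> convex hull W"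
    and "cone hull (convex hull V) = cone hull (convex hull W)"
    and "0 < \<epsilon>" and "\<epsilon> < 1" and "c \<ge> sqrt (real DIM('a)) / \<epsilon>"
  shows "(\<lambda>x. (c - \<epsilon> * c) *\<^sub>R x) ` (convex hull W)
           \<subseteq> UC (simplex_lattice V) ((\<lambda>x. c *\<^sub>R x) ` (convex hull W))"
proof -
  have "finite V" "finite W"
    using assms(2,5) by (auto intro: card_ge_0_finite)
  obtain h where h: "linear h" "\<And>w. w \<in> convex hull W \<Longrightarrow> 0 \<le> h w \<and> h w \<le> 1"
    and truncate: "\<And>t. 0 < t \<Longrightarrow> (\<lambda>x. t *\<^sub>R x) ` (convex hull W) = {p \<in> cone hull (convex hull W). h p \<le> t}"
    by (rule simplex_height_function[OF assms(4) \<open>finite W\<close> assms(6)]) iprover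
  obtain d :: nat and \<beta> where V_eq: "V = insert 0 (\<beta> ` {..<d})" and indep: "independent (\<beta> ` {..<d})"
    and inj: "inj_on \<beta> {..<d}" and sorted: "\<And>i j. i \<le> j \<Longrightarrow> j < d \<Longrightarrow> h (\<beta> i) \<le> h (\<beta> j)"
    by (rule simplex_vertices_sorted_enumeration[where f = h, OF assms(1) \<open>finite V\<close> assms(3)]) iprover
  have bounds: "0 \<le> h (\<beta> k) \<and> h (\<beta> k) \<le> 1" if "k < d" for k
  proof (rule h(2))
    have "\<beta> k \<in> convex hull V"
      using that V_eq by (simp add: hull_inc)
    then show "\<beta> k \<in> convex hull W"
      using assms(7) by blast
  qed
  have "1 \<le> sqrt (real DIM('a))"
    using DIM_positive[where 'a = 'a] by simp
  moreover have "sqrt (real DIM('a)) \<le> \<epsilon> * c"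
    using assms(9,11) by (simp add: field_simps)
  ultimately have "1 \<le> \<epsilon> * c"
    by linarith
  then have "0 < c"
    using zero_less_mult_pos[of \<epsilon> c] assms(9) by linarith
  then have "0 < c - \<epsilon> * c"
    using assms(10) by simp
  have cut: "(\<lambda>x. t *\<^sub>R x) ` (convex hull W) = {p \<in> cone hull (convex hull V). h p \<le> t}" if "0 < t" for t
    unfolding assms(8) by (rule truncate[OF that])
  have "x \<in> UC (simplex_lattice V) ((\<lambda>x. c *\<^sub>R x) ` (convex hull W))"
    if "x \<in> (\<lambda>x. (c - \<epsilon> * c) *\<^sub>R x) ` (convex hull W)" for x
    unfolding cut[OF \<open>0 < c\<close>] V_eq simplex_lattice_increments
  proof (rule mem_UC_truncated_cone[OF h(1) indep inj sorted bounds])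
    have "x \<in> {p \<in> cone hull (convex hull (insert 0 (\<beta> ` {..<d}))). h p \<le> c - \<epsilon> * c}"
      using that unfolding cut[OF \<open>0 < c - \<epsilon> * c\<close>] V_eq .
    then show "x \<in> cone hull (convex hull (insert 0 (\<beta> ` {..<d})))" and "h x \<le> c - 1"
      using \<open>1 \<le> \<epsilon> * c\<close> by simp_all
  qed
  then show ?thesis
    by (rule subsetI)
qed

end
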